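(* There exists a constant $\eta>0$ such that for all lines $H_1,H_2\in\mathcal H$ (in general position) and every $R>0$, $$G(H_1,H_2):=\int_{\mathcal H}\mathbf 1\{c(H_1,H_2,H_3)\in B(0,R)\}\,\Lambda(\mathrm dH_3)\le \eta R.$$
   Context: $\mathcal H$ is the set of lines in $\mathbb{R}^2$, and $\Lambda$ is the translation- and rotation-invariant measure on $\mathcal H$ normalized so that the lines meeting the unit disk have measure $2$; equivalently $\int_{\mathcal H}f(H)\Lambda(\mathrm dH)=\int_{S^1}\int_0^\infty f(H(r,u))\,\mathrm dr\,\sigma(\mathrm du)$, where $H(r,u)$ is the line at distance $r$ from the origin with unit normal $u$, and $\sigma$ is the rotation-invariant measure on $S^1$ with $\sigma(S^1)=2$. For three lines in general position, $c(H_1,H_2,H_3)$ is the incenter of the unique triangle formed by them. $B(0,R)$ is the closed disk of radius $R$ centered at the origin. *)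

theory Defs
  imports "HOL-Analysis.Analysis"
begin

definition hline :: "real \<Rightarrow> real \<Rightarrow> (real \<times> real) set" where
  "hline r t = {x. fst x * cos t + snd x * sin t = r}"

definition is_line :: "(real \<times> real) set \<Rightarrow> bool" where
  "is_line H \<longleftrightarrow> (\<exists>r t. H = hline r t)"

definition gen_pos2 :: "(real \<times> real) set \<Rightarrow> (real \<times> real) set \<Rightarrow> bool" where
  "gen_pos2 H1 H2 \<longleftrightarrow> is_line H1 \<and> is_line H2 \<and> (\<exists>!p. p \<in> H1 \<and> p \<in> H2)"

definition gen_pos3 :: "(real \<times> real) set \<Rightarrow> (real \<times> real) set \<Rightarrow> (real \<times> real) set \<Rightarrow> bool" where
  "gen_pos3 H1 H2 H3 \<longleftrightarrow> gen_pos2 H1 H2 \<and> gen_pos2 H2 H3 \<and> gen_pos2 H1 H3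
      \<and> H1 \<inter> H2 \<inter> H3 = {}"

definition meet :: "(real \<times> real) set \<Rightarrow> (real \<times> real) set \<Rightarrow> real \<times> real" where
  "meet H1 H2 = (THE p. p \<in> H1 \<and> p \<in> H2)"

definition incenter :: "(real \<times> real) set \<Rightarrow> (real \<times> real) set \<Rightarrow> (real \<times> real) set \<Rightarrow> real \<times> real" where
  "incenter H1 H2 H3 = (THE c.
      c \<in> interior (convex hull {meet H2 H3, meet H1 H3, meet H1 H2})
      \<and> infdist c H1 = infdist c H2 \<and> infdist c H2 = infdist c H3)"

text \<open>Integral w.r.t. the motion-invariant line measure \<Lambda>:
  \<open>\<integral> f d\<Lambda> = \<integral>_{S^1} \<integral>_0^\<infinity> f(H(r,u)) dr \<sigma>(du)\<close> with \<sigma>(S^1) = 2,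
  i.e. \<sigma> = (arc length)/\<pi>, parametrising u = (cos t, sin t), t \<in> [0, 2\<pi>).\<close>
definition line_nn_integral :: "((real \<times> real) set \<Rightarrow> ennreal) \<Rightarrow> ennreal" where
  "line_nn_integral f =
     (\<integral>\<^sup>+ rt. f (hline (fst rt) (snd rt))
                * indicator ({0..} \<times> {0..<2*pi}) rt \<partial>(lborel \<Otimes>\<^sub>M lborel)) / ennreal pi"

text \<open>G(H1,H2) for radius R; triples not in general position (a \<Lambda>-null set of H3
  when H1,H2 are in general position) are not counted.\<close>
definition G :: "real \<Rightarrow> (real \<times> real) set \<Rightarrow> (real \<times> real) set \<Rightarrow> ennreal" where
  "G R H1 H2 = line_nn_integral (\<lambda>H3.
      indicator {H3. gen_pos3 H1 H2 H3 \<and> incenter H1 H2 H3 \<in> cball 0 R} H3)"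

end

theory Submission
  imports Defs
begin

text \<open>The incenter c of the triangle cut out by H1, H2, H3 is equidistant from H1 and H3.
  Writing H1 = H(a, u) and H3 = H(r, v), this says \<open>\<bar>c\<bullet>u - a\<bar> = \<bar>c\<bullet>v - r\<bar>\<close>; if moreover
  \<open>\<bar>c\<bar> \<le> R\<close> then both inner products are at most R in absolute value, so \<open>r\<close> lies within 2R
  of \<open>a\<close> or of \<open>-a\<close>. For each direction the admissible offsets therefore form a set of length
  at most 8R, and integrating over the directions (of \<sigma>-mass 2) gives \<open>G(H1, H2) \<le> 16 R\<close>.\<close>

definition unit_dir :: "real \<Rightarrow> real \<times> real" where
  "unit_dir t = (cos t, sin t)"

lemma norm_unit_dir [simp]: "norm (unit_dir t) = 1"
  by (simp add: unit_dir_def norm_Pair)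

lemma hline_eq: "hline r t = {x. x \<bullet> unit_dir t = r}"
  by (simp add: hline_def unit_dir_def inner_Pair_0 inner_prod_def)

lemma infdist_hyperplane:
  fixes x u :: "'a::real_inner"
  assumes "norm u = 1"
  shows "infdist x {y. y \<bullet> u = r} = \<bar>x \<bullet> u - r\<bar>"
proof -
  define p where "p = x - (x \<bullet> u - r) *\<^sub>R u"
  have "u \<bullet> u = 1"
    using assms by (simp add: norm_eq_sqrt_inner)
  then have p_in: "p \<in> {y. y \<bullet> u = r}"
    by (simp add: p_def inner_diff_left)
  have "dist x p = \<bar>x \<bullet> u - r\<bar>"
    using assms by (simp add: p_def dist_norm)
  then have "infdist x {y. y \<bullet> u = r} \<le> \<bar>x \<bullet> u - r\<bar>"
    using p_in by (intro infdist_le2) auto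
  moreover have "\<bar>x \<bullet> u - r\<bar> \<le> infdist x {y. y \<bullet> u = r}"
  proof -
    have "{y. y \<bullet> u = r} \<noteq> {}"
      using p_in by blast
    moreover have "\<bar>x \<bullet> u - r\<bar> \<le> dist x y" if "y \<bullet> u = r" for y
      using that Cauchy_Schwarz_ineq2[of "x - y" u] assms by (simp add: dist_norm inner_diff_left)
    ultimately show ?thesis
      by (simp add: infdist_notempty) (intro cINF_greatest; simp)
  qed
  ultimately show ?thesis
    by (rule antisym)
qed

lemma inner_affine_comb3:
  fixes A B C d :: "'a::real_inner"
  assumes "x + y + z = 1"
  shows "(x *\<^sub>R A + y *\<^sub>R B + z *\<^sub>R C) \<bullet> d - r
           = x * (A \<bullet> d - r) + y * (B \<bullet> d - r) + z * (C \<bullet> d - r)"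
proof -
  have "r = x * r + y * r + z * r"
    using assms by (metis distrib_right mult_1)
  then show ?thesis
    by (simp add: inner_add_left algebra_simps)
qed

lemma not_collinear_by_hyperplane:
  fixes A B C u :: "'a::real_inner"
  assumes "A \<noteq> C" "A \<bullet> u = r" "C \<bullet> u = r" "B \<bullet> u \<noteq> r"
  shows "\<not> collinear {A, B, C}"
proof
  assume "collinear {A, B, C}"
  then obtain x where "B = x *\<^sub>R A + (1 - x) *\<^sub>R C"
    using assms(1) by (auto simp: collinear_3_expand)
  then have "B \<bullet> u - r = x * (A \<bullet> u - r) + (1 - x) * (C \<bullet> u - r)"
    using inner_affine_comb3[of x "1 - x" 0 A C C u r] by simp
  then show False
    using assms(2-4) by simp
qed

lemma weights_inverse_proportional:
  fixes k1 k2 k3 :: real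
  defines "S \<equiv> 1/k1 + 1/k2 + 1/k3"
  assumes "k1 > 0" "k2 > 0" "k3 > 0"
  shows "(0 < x \<and> 0 < y \<and> 0 < z \<and> x + y + z = 1 \<and> x * k1 = y * k2 \<and> y * k2 = z * k3)
     \<longleftrightarrow> x = 1 / (S * k1) \<and> y = 1 / (S * k2) \<and> z = 1 / (S * k3)"
proof -
  have "S > 0"
    using assms by (simp add: S_def add_pos_pos)
  show ?thesis
  proof
    assume h: "0 < x \<and> 0 < y \<and> 0 < z \<and> x + y + z = 1 \<and> x * k1 = y * k2 \<and> y * k2 = z * k3"
    define p where "p = x * k1"
    have xyz: "x = p / k1" "y = p / k2" "z = p / k3"
      using h assms by (auto simp: p_def field_simps)
    then have "p * S = 1"
      using h by (simp add: S_def field_simps)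
    then have "p = 1 / S"
      using \<open>S > 0\<close> by (simp add: eq_divide_eq)
    then show "x = 1 / (S * k1) \<and> y = 1 / (S * k2) \<and> z = 1 / (S * k3)"
      using xyz by simp
  next
    assume xyz: "x = 1 / (S * k1) \<and> y = 1 / (S * k2) \<and> z = 1 / (S * k3)"
    have "x + y + z = (1/k1 + 1/k2 + 1/k3) / S"
      using xyz by (simp add: add_divide_distrib mult.commute)
    moreover have "x * k1 = 1 / S" "y * k2 = 1 / S" "z * k3 = 1 / S"
      using xyz assms by auto
    ultimately show "0 < x \<and> 0 < y \<and> 0 < z \<and> x + y + z = 1 \<and> x * k1 = y * k2 \<and> y * k2 = z * k3"
      using xyz assms \<open>S > 0\<close> by (simp add: S_def)
  qed
qed

lemma is_line_hyperplane:
  assumes "is_line H"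
  obtains u r where "norm u = 1" "H = {x. x \<bullet> u = r}"
  using assms norm_unit_dir unfolding is_line_def hline_eq by blast

lemma meet_mem:
  assumes "gen_pos2 H H'"
  shows "meet H H' \<in> H" "meet H H' \<in> H'"
  using theI'[of "\<lambda>p. p \<in> H \<and> p \<in> H'"] assms by (auto simp: gen_pos2_def meet_def)

lemma gen_pos3_hyperplanes:
  assumes "gen_pos3 H1 H2 H3"
  obtains u1 r1 u2 r2 u3 r3
  where "norm u1 = 1" "norm u2 = 1" "norm u3 = 1"
    and "H1 = {x. x \<bullet> u1 = r1}" "H2 = {x. x \<bullet> u2 = r2}" "H3 = {x. x \<bullet> u3 = r3}"
    and "meet H2 H3 \<bullet> u1 \<noteq> r1" "meet H2 H3 \<bullet> u2 = r2" "meet H2 H3 \<bullet> u3 = r3"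
    and "meet H1 H3 \<bullet> u1 = r1" "meet H1 H3 \<bullet> u2 \<noteq> r2" "meet H1 H3 \<bullet> u3 = r3"
    and "meet H1 H2 \<bullet> u1 = r1" "meet H1 H2 \<bullet> u2 = r2" "meet H1 H2 \<bullet> u3 \<noteq> r3"
proof -
  have gp: "gen_pos2 H1 H2" "gen_pos2 H2 H3" "gen_pos2 H1 H3" and no_common: "H1 \<inter> H2 \<inter> H3 = {}"
    using assms by (auto simp: gen_pos3_def)
  have "is_line H1" "is_line H2" "is_line H3"
    using gp by (simp_all add: gen_pos2_def)
  then obtain u1 r1 u2 r2 u3 r3 where u: "norm u1 = 1" "norm u2 = 1" "norm u3 = 1"
    and H: "H1 = {x. x \<bullet> u1 = r1}" "H2 = {x. x \<bullet> u2 = r2}" "H3 = {x. x \<bullet> u3 = r3}"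
    by (elim is_line_hyperplane)
  have "meet H2 H3 \<in> H2" "meet H2 H3 \<in> H3" "meet H1 H3 \<in> H1" "meet H1 H3 \<in> H3"
       "meet H1 H2 \<in> H1" "meet H1 H2 \<in> H2"
    using meet_mem[OF gp(1)] meet_mem[OF gp(2)] meet_mem[OF gp(3)] by simp_all
  moreover from this have "meet H2 H3 \<notin> H1" "meet H1 H3 \<notin> H2" "meet H1 H2 \<notin> H3"
    using no_common by blast+
  ultimately show ?thesis
    using that[OF u H] by (simp only: H mem_Collect_eq) simp
qed

lemma ex1_incenter:
  assumes "gen_pos3 H1 H2 H3"
  shows "\<exists>!c. c \<in> interior (convex hull {meet H2 H3, meet H1 H3, meet H1 H2})
              \<and> infdist c H1 = infdist c H2 \<and> infdist c H2 = infdist c H3"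
proof -
  define A B C where "A = meet H2 H3" "B = meet H1 H3" "C = meet H1 H2"
  obtain u1 r1 u2 r2 u3 r3 where u: "norm u1 = 1" "norm u2 = 1" "norm u3 = 1"
    and H: "H1 = {x. x \<bullet> u1 = r1}" "H2 = {x. x \<bullet> u2 = r2}" "H3 = {x. x \<bullet> u3 = r3}"
    and vertices: "A \<bullet> u1 \<noteq> r1" "A \<bullet> u2 = r2" "A \<bullet> u3 = r3"
      "B \<bullet> u1 = r1" "B \<bullet> u2 \<noteq> r2" "B \<bullet> u3 = r3"
      "C \<bullet> u1 = r1" "C \<bullet> u2 = r2" "C \<bullet> u3 \<noteq> r3"
    unfolding A_B_C_def by (rule gen_pos3_hyperplanes[OF assms])
  define k1 k2 k3 where "k1 = \<bar>A \<bullet> u1 - r1\<bar>" "k2 = \<bar>B \<bullet> u2 - r2\<bar>" "k3 = \<bar>C \<bullet> u3 - r3\<bar>"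
  have k_pos: "k1 > 0" "k2 > 0" "k3 > 0"
    using vertices by (auto simp: k1_k2_k3_def)
  define S where "S = 1/k1 + 1/k2 + 1/k3"
  define c0 where "c0 = (1 / (S * k1)) *\<^sub>R A + (1 / (S * k2)) *\<^sub>R B + (1 / (S * k3)) *\<^sub>R C"
  have "\<not> collinear {A, B, C}"
    using vertices by (intro not_collinear_by_hyperplane[of A C u2 r2]) auto
  moreover have "DIM(real \<times> real) = 2"
    by simp
  ultimately have interior: "interior (convex hull {A, B, C}) =
      {v. \<exists>x y z. 0 < x \<and> 0 < y \<and> 0 < z \<and> x + y + z = 1 \<and> x *\<^sub>R A + y *\<^sub>R B + z *\<^sub>R C = v}"
    by (rule interior_convex_hull_3_minimal)
  \<comment> \<open>In barycentric coordinates the distance to each side is the weight of the opposite vertex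
      times that vertex's height, so equidistance forces weights inversely proportional to the heights.\<close>
  have dists: "infdist (x *\<^sub>R A + y *\<^sub>R B + z *\<^sub>R C) H1 = x * k1"
              "infdist (x *\<^sub>R A + y *\<^sub>R B + z *\<^sub>R C) H2 = y * k2"
              "infdist (x *\<^sub>R A + y *\<^sub>R B + z *\<^sub>R C) H3 = z * k3"
    if "0 < x" "0 < y" "0 < z" "x + y + z = 1" for x y z
  proof -
    have "(x *\<^sub>R A + y *\<^sub>R B + z *\<^sub>R C) \<bullet> u1 - r1 = x * (A \<bullet> u1 - r1)"
         "(x *\<^sub>R A + y *\<^sub>R B + z *\<^sub>R C) \<bullet> u2 - r2 = y * (B \<bullet> u2 - r2)"
         "(x *\<^sub>R A + y *\<^sub>R B + z *\<^sub>R C) \<bullet> u3 - r3 = z * (C \<bullet> u3 - r3)"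
      by (simp_all add: inner_affine_comb3[OF \<open>x + y + z = 1\<close>] vertices)
    then show "infdist (x *\<^sub>R A + y *\<^sub>R B + z *\<^sub>R C) H1 = x * k1"
              "infdist (x *\<^sub>R A + y *\<^sub>R B + z *\<^sub>R C) H2 = y * k2"
              "infdist (x *\<^sub>R A + y *\<^sub>R B + z *\<^sub>R C) H3 = z * k3"
      using that u by (simp_all add: H infdist_hyperplane k1_k2_k3_def abs_mult)
  qed
  have "(c \<in> interior (convex hull {A, B, C}) \<and> infdist c H1 = infdist c H2 \<and> infdist c H2 = infdist c H3)
        \<longleftrightarrow> (\<exists>x y z. (0 < x \<and> 0 < y \<and> 0 < z \<and> x + y + z = 1 \<and> x * k1 = y * k2 \<and> y * k2 = z * k3)
                     \<and> c = x *\<^sub>R A + y *\<^sub>R B + z *\<^sub>R C)" for c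
    unfolding interior by (auto simp: dists) metis
  also have "\<dots> c \<longleftrightarrow> c = c0" for c
    unfolding weights_inverse_proportional[OF k_pos] S_def[symmetric] c0_def by auto
  finally show ?thesis
    unfolding A_B_C_def[symmetric] by simp
qed

lemma incenter_equidistant:
  assumes "gen_pos3 H1 H2 H3"
  shows "infdist (incenter H1 H2 H3) H1 = infdist (incenter H1 H2 H3) H3"
  using theI'[OF ex1_incenter[OF assms]] by (simp add: incenter_def)

lemma incenter_in_cball_offsets:
  assumes "gen_pos3 (hline a s) H2 (hline r t)"
    and "incenter (hline a s) H2 (hline r t) \<in> cball 0 R"
  shows "\<bar>r - a\<bar> \<le> 2 * R \<or> \<bar>r + a\<bar> \<le> 2 * R"
proof -
  define c where "c = incenter (hline a s) H2 (hline r t)"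
  have "\<bar>c \<bullet> unit_dir s - a\<bar> = \<bar>c \<bullet> unit_dir t - r\<bar>"
    using incenter_equidistant[OF assms(1)] by (simp add: c_def hline_eq infdist_hyperplane)
  moreover have "\<bar>c \<bullet> unit_dir s\<bar> \<le> R" "\<bar>c \<bullet> unit_dir t\<bar> \<le> R"
    using assms(2) Cauchy_Schwarz_ineq2[of c "unit_dir s"] Cauchy_Schwarz_ineq2[of c "unit_dir t"]
    by (simp_all add: c_def)
  ultimately show ?thesis
    by linarith
qed

lemma line_nn_integral_offset_band:
  assumes "d \<ge> 0" and "\<And>r t. hline r t \<in> S \<Longrightarrow> \<bar>r - a\<bar> \<le> d \<or> \<bar>r + a\<bar> \<le> d"
  shows "line_nn_integral (indicator S) \<le> ennreal (8 * d)"
proof -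
  define M :: "(real \<times> real) measure" where "M = lborel \<Otimes>\<^sub>M lborel"
  define J where "J = {0..<2*pi}"
  define I1 I2 where "I1 = {a - d .. a + d}" "I2 = {-a - d .. -a + d}"
  have "indicator S (hline (fst rt) (snd rt)) * indicator ({0..} \<times> J) rt
      \<le> indicator (I1 \<times> J) rt + (indicator (I2 \<times> J) rt :: ennreal)" for rt
    using assms(2)[of "fst rt" "snd rt"]
    by (cases rt) (auto simp: indicator_def I1_I2_def abs_le_iff)
  then have "(\<integral>\<^sup>+ rt. indicator S (hline (fst rt) (snd rt)) * indicator ({0..} \<times> J) rt \<partial>M)
      \<le> (\<integral>\<^sup>+ rt. indicator (I1 \<times> J) rt + indicator (I2 \<times> J) rt \<partial>M)"
    by (rule nn_integral_mono)
  also have "\<dots> = emeasure M (I1 \<times> J) + emeasure M (I2 \<times> J)"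
    by (simp add: nn_integral_add M_def I1_I2_def J_def)
  also have "\<dots> = ennreal (2 * d) * ennreal (2 * pi) + ennreal (2 * d) * ennreal (2 * pi)"
    using assms(1) by (simp add: M_def lborel.emeasure_pair_measure_Times I1_I2_def J_def)
  also have "\<dots> = ennreal (8 * d * pi)"
    using assms(1) by (simp flip: ennreal_mult'' ennreal_plus)
  finally have "line_nn_integral (indicator S) \<le> ennreal (8 * d * pi) / ennreal pi"
    unfolding line_nn_integral_def M_def J_def by (rule divide_right_mono_ennreal)
  also have "\<dots> = ennreal (8 * d)"
    using assms(1) by (simp add: divide_ennreal)
  finally show ?thesis .
qed

theorem lemma3p3:
  shows "\<exists>\<eta>::real. \<eta> > 0 \<and>
    (\<forall>H1 H2 R. gen_pos2 H1 H2 \<longrightarrow> R > 0 \<longrightarrow> G R H1 H2 \<le> ennreal (\<eta> * R))"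
proof (intro exI[of _ 16] conjI allI impI)
  fix H1 H2 :: "(real \<times> real) set" and R :: real
  assume "gen_pos2 H1 H2" "R > 0"
  then obtain a s where H1: "H1 = hline a s"
    by (auto simp: gen_pos2_def is_line_def)
  have "G R H1 H2 \<le> ennreal (8 * (2 * R))"
    unfolding G_def
  proof (rule line_nn_integral_offset_band)
    show "\<bar>r - a\<bar> \<le> 2 * R \<or> \<bar>r + a\<bar> \<le> 2 * R"
      if "hline r t \<in> {H3. gen_pos3 H1 H2 H3 \<and> incenter H1 H2 H3 \<in> cball 0 R}" for r t
      using that incenter_in_cball_offsets[of a s H2 r t R] by (simp add: H1)
  qed (use \<open>R > 0\<close> in simp)
  then show "G R H1 H2 \<le> ennreal (16 * R)"
    by simp
qed simp

end
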